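(* Let $1\le d<k$ and let $\mathcal{L}\subset\mathbb{R}^k=\mathbb{R}^d\times\mathbb{R}^{k-d}$ be a lattice such that the projection $\pi\colon\mathbb{R}^k\to\mathbb{R}^d$ is injective on $\mathcal{L}$ and $\pi_{\mathrm{int}}(\mathcal{L})$ is dense in $H=\mathbb{R}^{k-d}$. Let $(A_i)_{i\in\mathbb{N}}$ be a sequence of relatively compact, measurable subsets of $H$ with non-empty interiors and boundaries of Lebesgue measure $0$, such that $A_{i+1}\subseteq A_i$ for all $i\ge1$ and $\lim_{i\to\infty}\mathrm{vol}(A_i)=0$. Then there exists a sequence $(R_i)_{i\in\mathbb{N}}$ of real numbers such that, for all $i\ge1$ and all $R\ge R_i$, $$\#\{\lambda\in L: |\lambda|\le R\text{ and }\lambda^\star\in A_i\}\le 2^{d+1}\,\mathrm{dens}(\mathcal{L})\,\mathrm{vol}(A_i)\,R^d.$$ Further, if $(T_j)_{j\in\mathbb{N}}$ is any sequence of real numbers tending to $\infty$, then $$\#\{\lambda\in L: |\lambda|\le T_j\text{ and }\lambda^\star\in A_j\}=o(T_j^d)\quad\text{as } j\to\infty.$$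
   Context: $\pi_{\mathrm{int}}$ is the projection of $\mathbb{R}^k$ onto its last $k-d$ coordinates; $L=\pi(\mathcal{L})$ and $\lambda^\star=\pi_{\mathrm{int}}(\pi^{-1}(\lambda)\cap\mathcal{L})$ for $\lambda\in L$. $|\lambda|$ denotes the sup-norm of $\lambda\in\mathbb{R}^d$. $\mathrm{dens}(\mathcal{L})$ is the reciprocal of the volume of a fundamental domain of $\mathcal{L}$. *)

theory Defs
  imports "HOL-Analysis.Analysis" "HOL-Library.Landau_Symbols"
begin

definition is_lattice :: "'a::euclidean_space set \<Rightarrow> bool" where
  "is_lattice \<Lambda> \<longleftrightarrow> (\<exists>B. independent B \<and> card B = DIM('a) \<and>
      \<Lambda> = {(\<Sum>b\<in>B. of_int (c b) *\<^sub>R b) | c. True})"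

definition fund_par :: "'a::euclidean_space set \<Rightarrow> 'a set" where
  "fund_par B = {(\<Sum>b\<in>B. t b *\<^sub>R b) | t. \<forall>b\<in>B. 0 \<le> t b \<and> t b < 1}"

definition lattice_dens :: "'a::euclidean_space set \<Rightarrow> real" where
  "lattice_dens \<Lambda> = 1 / measure lborel (fund_par (SOME B. independent B \<and> card B = DIM('a) \<and>
      \<Lambda> = {(\<Sum>b\<in>B. of_int (c b) *\<^sub>R b) | c. True}))"

text \<open>The star map: for \<lambda> in L = \<pi>(\<L>), \<lambda>* = \<pi>_int(\<pi>^{-1}(\<lambda>) \<inter> \<L>).\<close>
definition star_map :: "('a \<times> 'b) set \<Rightarrow> 'a \<Rightarrow> 'b" where
  "star_map \<L> l = snd (THE x. x \<in> \<L> \<and> fst x = l)"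

end

theory Submission
  imports Defs
begin

(*
  Let F be a measurable set of volume 1/dens(\<L>) whose translates by distinct lattice
  points are disjoint, with physical parts bounded by r and internal parts of norm < \<delta>.
  The translates v + F by the lattice points v counted at radius R then lie, pairwise
  disjoint, in the box [-(R+r), R+r]^d times the \<delta>-neighbourhood A\<^sub>\<delta> of A, so the count is
  at most dens(\<L>) (2(R+r))^d vol A\<^sub>\<delta>. Density of the internal projection yields such an F
  for every \<delta> > 0: cut a fundamental parallelepiped into finitely many pieces and move each
  piece by a lattice vector whose internal part is \<delta>-close to the piece. As the frontier
  of A is null, vol A\<^sub>\<delta> tends to vol A > 0, so for small \<delta> and large R the count is at
  most 2^(d+1) dens(\<L>) vol A R^d. The o(T^d) statement follows by comparing A j with A i
  for a fixed i \<le> j with vol (A i) small.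
*)

definition int_span :: "'a::real_vector set \<Rightarrow> 'a set" where
  "int_span B = {(\<Sum>b\<in>B. of_int (c b) *\<^sub>R b) | c. True}"

lemma int_span_diff:
  assumes "x \<in> int_span B" "y \<in> int_span B"
  shows "x - y \<in> int_span B"
proof -
  obtain c c' where "x = (\<Sum>b\<in>B. of_int (c b) *\<^sub>R b)" "y = (\<Sum>b\<in>B. of_int (c' b) *\<^sub>R b)"
    using assms unfolding int_span_def by auto
  then have "x - y = (\<Sum>b\<in>B. of_int (c b - c' b) *\<^sub>R b)"
    by (simp add: sum_subtractf scaleR_diff_left)
  then show ?thesis unfolding int_span_def by (intro CollectI exI[of _ "\<lambda>b. c b - c' b"]) simp
qed

lemma sum_representation_basis:
  fixes B :: "'a::euclidean_space set"
  assumes "independent B" "span B = UNIV"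
  shows "(\<Sum>b\<in>B. representation B x b *\<^sub>R b) = x"
  using assms independent_bound by (intro sum_representation_eq) auto

lemma representation_sum_scaleR:
  fixes B :: "'a::euclidean_space set"
  assumes B: "independent B" and b: "b \<in> B"
  shows "representation B (\<Sum>c\<in>B. t c *\<^sub>R c) b = t b"
proof -
  have "finite B" using B independent_bound by blast
  then have "representation B (\<Sum>c\<in>B. t c *\<^sub>R c) b = (\<Sum>c\<in>B. t c * (if b = c then 1 else 0))"
    using B by (simp add: representation_sum representation_scale representation_basis span_base span_scale)
  also have "\<dots> = t b" using b \<open>finite B\<close> by (simp add: if_distrib cong: if_cong)
  finally show ?thesis .
qed

lemma fund_par_eq_representation:
  fixes B :: "'a::euclidean_space set"
  assumes B: "independent B" "span B = UNIV"
  shows "fund_par B = {x. \<forall>b\<in>B. 0 \<le> representation B x b \<and> representation B x b < 1}"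
proof (intro equalityI subsetI)
  fix x assume "x \<in> fund_par B"
  then show "x \<in> {x. \<forall>b\<in>B. 0 \<le> representation B x b \<and> representation B x b < 1}"
    unfolding fund_par_def using representation_sum_scaleR[OF B(1)] by auto
next
  fix x assume "x \<in> {x. \<forall>b\<in>B. 0 \<le> representation B x b \<and> representation B x b < 1}"
  moreover have "x = (\<Sum>b\<in>B. representation B x b *\<^sub>R b)"
    using sum_representation_basis[OF B] by simp
  ultimately show "x \<in> fund_par B" unfolding fund_par_def by blast
qed

lemma representation_int_span:
  fixes B :: "'a::euclidean_space set"
  assumes "independent B" "x \<in> int_span B" "b \<in> B"
  shows "representation B x b \<in> \<int>"
  using assms by (auto simp: int_span_def representation_sum_scaleR)

lemma fund_par_int_span_diff_eq:
  fixes B :: "'a::euclidean_space set"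
  assumes B: "independent B" "span B = UNIV"
    and z: "z \<in> fund_par B" and z': "z' \<in> fund_par B" and d: "z - z' \<in> int_span B"
  shows "z = z'"
proof -
  let ?r = "representation B"
  have "?r z b = ?r z' b" if b: "b \<in> B" for b
  proof -
    have "?r z b - ?r z' b \<in> \<int>"
      using representation_int_span[OF B(1) d b] B by (simp add: representation_diff)
    moreover have "\<bar>?r z b - ?r z' b\<bar> < 1"
      using z z' b unfolding fund_par_eq_representation[OF B] by (force simp: abs_less_iff)
    ultimately show ?thesis using Ints_nonzero_abs_less1 by fastforce
  qed
  then have "(\<Sum>b\<in>B. ?r z b *\<^sub>R b) = (\<Sum>b\<in>B. ?r z' b *\<^sub>R b)" by simp
  then show ?thesis using sum_representation_basis[OF B] by metis
qed

lemma fund_par_borel: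
  fixes B :: "'a::euclidean_space set"
  assumes B: "independent B" "span B = UNIV"
  shows "fund_par B \<in> sets borel"
proof -
  have "finite B" using B independent_bound by blast
  have "(\<lambda>x. representation B x b) \<in> borel_measurable borel" for b
    using bounded_linear_representation[OF B]
    by (intro borel_measurable_continuous_onI linear_continuous_on)
  then show ?thesis
    unfolding fund_par_eq_representation[OF B] using \<open>finite B\<close> by measurable
qed

lemma bounded_fund_par:
  fixes B :: "'a::euclidean_space set"
  assumes B: "independent B"
  shows "bounded (fund_par B)"
proof -
  have "norm x \<le> (\<Sum>b\<in>B. norm b)" if "x \<in> fund_par B" for x
  proof -
    obtain t where x: "x = (\<Sum>b\<in>B. t b *\<^sub>R b)" and t: "\<forall>b\<in>B. 0 \<le> t b \<and> t b < 1"
      using \<open>x \<in> fund_par B\<close> unfolding fund_par_def by auto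
    have "norm x \<le> (\<Sum>b\<in>B. norm (t b *\<^sub>R b))" unfolding x by (rule norm_sum)
    also have "\<dots> \<le> (\<Sum>b\<in>B. norm b)"
      using t by (intro sum_mono) (simp add: mult_left_le_one_le less_imp_le)
    finally show ?thesis .
  qed
  then show ?thesis unfolding bounded_iff by blast
qed

lemma lmeasurable_fund_par:
  fixes B :: "'a::euclidean_space set"
  assumes "independent B" "span B = UNIV"
  shows "fund_par B \<in> lmeasurable"
  using fund_par_borel[OF assms] bounded_fund_par[OF assms(1)]
  by (intro bounded_set_imp_lmeasurable) simp_all

lemma is_lattice_basis:
  fixes \<Lambda> :: "'a::euclidean_space set"
  assumes "is_lattice \<Lambda>"
  obtains B where "independent B" "span B = UNIV" "\<Lambda> = int_span B"
    "lattice_dens \<Lambda> = 1 / measure lebesgue (fund_par B)"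
proof -
  let ?basis = "\<lambda>B. independent B \<and> card B = DIM('a) \<and>
    \<Lambda> = {(\<Sum>b\<in>B. of_int (c b) *\<^sub>R b) | c. True}"
  define B where "B = (SOME B. ?basis B)"
  have "?basis B" unfolding B_def using assms unfolding is_lattice_def by (rule someI_ex)
  then have B: "independent B" "span B = UNIV" "\<Lambda> = int_span B"
    using card_ge_dim_independent[of B UNIV] by (auto simp: int_span_def)
  moreover have "lattice_dens \<Lambda> = 1 / measure lebesgue (fund_par B)"
    unfolding lattice_dens_def B_def[symmetric] using fund_par_borel[OF B(1,2)] by simp
  ultimately show ?thesis by (rule that)
qed

lemma measure_pos_if_interior_nonempty:
  assumes "S \<in> lmeasurable" "interior S \<noteq> {}"
  shows "measure lebesgue S > 0"
proof -
  have "\<not> negligible S"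
    using assms(2) open_not_negligible[OF open_interior] negligible_subset interior_subset by blast
  then show ?thesis using assms(1) negligible_iff_measure0 measure_nonneg by (metis order_le_less)
qed

lemma fund_par_measure_pos:
  fixes B :: "'a::euclidean_space set"
  assumes B: "independent B" "span B = UNIV"
  shows "measure lebesgue (fund_par B) > 0"
proof (rule measure_pos_if_interior_nonempty)
  let ?r = "\<lambda>b x. representation B x b"
  have cont: "continuous_on UNIV (?r b)" for b
    using bounded_linear_representation[OF B] by (intro linear_continuous_on)
  have "finite B" using B independent_bound by blast
  define U where "U = (\<Inter>b\<in>B. {x. 0 < ?r b x} \<inter> {x. ?r b x < 1})"
  have "open U" unfolding U_def using \<open>finite B\<close> cont
    by (intro open_INT ballI open_Int open_Collect_less) auto
  moreover have "U \<subseteq> fund_par B"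
    unfolding U_def fund_par_eq_representation[OF B] by (auto simp: less_imp_le)
  moreover have "(\<Sum>b\<in>B. (1/2) *\<^sub>R b) \<in> U"
    unfolding U_def using representation_sum_scaleR[OF B(1)] by auto
  ultimately show "interior (fund_par B) \<noteq> {}" using interior_maximal by blast
  show "fund_par B \<in> lmeasurable" using B by (rule lmeasurable_fund_par)
qed

lemma measure_lebesgue_Times:
  fixes X :: "'a::euclidean_space set" and Y :: "'b::euclidean_space set"
  assumes "X \<in> sets borel" "Y \<in> sets borel" "bounded X" "bounded Y"
  shows "measure lebesgue (X \<times> Y) = measure lebesgue X * measure lebesgue Y"
proof -
  note fin = emeasure_bounded_finite[OF \<open>bounded X\<close>] emeasure_bounded_finite[OF \<open>bounded Y\<close>]
  have "emeasure lborel (X \<times> Y) = emeasure (lborel \<Otimes>\<^sub>M lborel) (X \<times> Y)"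
    by (simp add: lborel_prod)
  also have "\<dots> = emeasure lborel X * emeasure lborel Y"
    using assms by (intro lborel.emeasure_pair_measure_Times) auto
  finally have "measure lborel (X \<times> Y) = measure lborel X * measure lborel Y"
    using fin by (simp add: measure_def enn2real_mult)
  moreover have "X \<times> Y \<in> sets borel"
    using assms(1,2) by (metis borel_prod pair_measureI)
  ultimately show ?thesis using assms by simp
qed

lemma measure_cbox_infnorm:
  fixes c :: real
  assumes "0 \<le> c"
  shows "measure lebesgue (cbox (- c *\<^sub>R One) (c *\<^sub>R One :: 'a::euclidean_space)) = (2 * c) ^ DIM('a)"
proof -
  have "measure lebesgue (cbox (- c *\<^sub>R One) (c *\<^sub>R One :: 'a))
      = (\<Prod>b\<in>Basis. (c *\<^sub>R One - (- c *\<^sub>R One)) \<bullet> (b::'a))"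
    using assms by (subst measure_completion) (simp_all add: measure_lborel_cbox_eq)
  also have "\<dots> = (\<Prod>b\<in>(Basis::'a set). 2 * c)"
    by (intro prod.cong) (simp_all add: inner_add_left)
  finally show ?thesis by simp
qed

lemma infnorm_le_iff_cbox:
  fixes x :: "'a::euclidean_space"
  shows "infnorm x \<le> c \<longleftrightarrow> x \<in> cbox (- c *\<^sub>R One) (c *\<^sub>R One)"
  unfolding mem_box infnorm_Max
  by (auto simp: abs_le_iff)

lemma measure_finite_Union_lmeasurable:
  assumes "finite I" "\<And>i. i \<in> I \<Longrightarrow> A i \<in> lmeasurable" "disjoint_family_on A I"
  shows "measure lebesgue (\<Union>i\<in>I. A i) = (\<Sum>i\<in>I. measure lebesgue (A i))"
proof (rule measure_finite_Union)
  show "emeasure lebesgue (A i) \<noteq> \<infinity>" if "i \<in> I" for i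
    unfolding infinity_ennreal_def using assms(2)[OF that] by (rule fmeasurableD2)
qed (use assms in auto)

lemma card_mult_measure_le_if_disjoint_translates:
  fixes F X :: "'a::euclidean_space set"
  assumes "finite S" "F \<in> lmeasurable" "X \<in> lmeasurable"
    and disj: "disjoint_family_on (\<lambda>v. (+) v ` F) S"
    and sub: "\<And>v. v \<in> S \<Longrightarrow> (+) v ` F \<subseteq> X"
  shows "real (card S) * measure lebesgue F \<le> measure lebesgue X"
proof -
  have lm: "(+) v ` F \<in> lmeasurable" for v
    using \<open>F \<in> lmeasurable\<close> by (rule measurable_translation)
  have "real (card S) * measure lebesgue F = (\<Sum>v\<in>S. measure lebesgue ((+) v ` F))"
    by (simp add: measure_translation)
  also have "\<dots> = measure lebesgue (\<Union>v\<in>S. (+) v ` F)"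
    using \<open>finite S\<close> lm disj by (rule measure_finite_Union_lmeasurable[symmetric])
  also have "\<dots> \<le> measure lebesgue X"
    using assms(1,3) sub lm by (intro measure_mono_fmeasurable) auto
  finally show ?thesis .
qed

lemma finite_ball_cover_of_dense_image:
  fixes f :: "'a \<Rightarrow> 'b::euclidean_space"
  assumes dense: "closure (f ` D) = UNIV" and "bounded K" "0 < \<delta>"
  obtains U where "finite U" "U \<subseteq> D" "K \<subseteq> (\<Union>u\<in>U. ball (f u) \<delta>)"
proof -
  have "closure K \<subseteq> (\<Union>u\<in>D. ball (f u) \<delta>)"
  proof
    fix y
    have "y \<in> closure (f ` D)" using dense by simp
    then obtain u where "u \<in> D" "dist (f u) y < \<delta>" using closure_approachable \<open>0 < \<delta>\<close> by blast
    then show "y \<in> (\<Union>u\<in>D. ball (f u) \<delta>)" by auto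
  qed
  moreover have "compact (closure K)" using \<open>bounded K\<close> by (rule compact_closure[THEN iffD2])
  ultimately obtain U where "U \<subseteq> D" "finite U" "closure K \<subseteq> (\<Union>u\<in>U. ball (f u) \<delta>)"
    by (elim compactE_image) auto
  with closure_subset[of K] show ?thesis by (intro that) auto
qed

lemma partition_near_dense_image:
  fixes K :: "('a::euclidean_space \<times> 'b::euclidean_space) set"
  assumes K: "K \<in> lmeasurable" "bounded K"
    and dense: "closure (snd ` \<Lambda>) = UNIV" and "0 < \<delta>"
  obtains n :: nat and u P
  where "\<And>i. i < n \<Longrightarrow> u i \<in> \<Lambda>" "\<And>i. P i \<in> lmeasurable" "disjoint_family P"
    "K = (\<Union>i<n. P i)" "\<And>i z. z \<in> P i \<Longrightarrow> dist (snd (u i)) (snd z) < \<delta>"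
proof -
  obtain U where "finite U" "U \<subseteq> \<Lambda>" and cover: "snd ` K \<subseteq> (\<Union>v\<in>U. ball (snd v) \<delta>)"
    using finite_ball_cover_of_dense_image[OF dense _ \<open>0 < \<delta>\<close>]
      bounded_linear_image[OF K(2) bounded_linear_snd] by blast
  obtain n :: nat and u where U: "U = u ` {..<n}"
    using finite_imp_nat_seg_image_inj_on[OF \<open>finite U\<close>] by (auto simp: lessThan_def)
  define G where "G i = (UNIV :: 'a set) \<times> ball (snd (u i)) \<delta>" for i
  define P where "P i = K \<inter> disjointed G i" for i
  have "u i \<in> \<Lambda>" if "i < n" for i using that U \<open>U \<subseteq> \<Lambda>\<close> by blast
  moreover have "P i \<in> lmeasurable" for i
  proof -
    have "range (disjointed G) \<subseteq> sets lebesgue"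
      by (rule sets.range_disjointed_sets) (auto simp: G_def intro!: lborelD borel_open open_Times)
    then show ?thesis
      unfolding P_def using K
      by (intro fmeasurable_Int_fmeasurable) (auto intro: bounded_set_imp_lmeasurable)
  qed
  moreover have "disjoint_family P"
    using disjoint_family_disjointed[of G] by (auto simp: P_def disjoint_family_on_def)
  moreover have "K = (\<Union>i<n. P i)"
  proof -
    have "K \<subseteq> (\<Union>i<n. G i)" using cover U by (fastforce simp: G_def)
    then show ?thesis
      unfolding P_def using finite_UN_disjointed_eq[of G n] by (auto simp: atLeast0LessThan)
  qed
  moreover have "dist (snd (u i)) (snd z) < \<delta>" if "z \<in> P i" for i z
    using that disjointed_subset[of G i] by (auto simp: P_def G_def)
  ultimately show ?thesis by (rule that)
qed

lemma rearranged_fund_par: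
  fixes B :: "'a::euclidean_space set" and n :: nat
  assumes B: "independent B" "span B = UNIV"
    and u: "\<And>i. i < n \<Longrightarrow> u i \<in> int_span B"
    and P: "\<And>i. P i \<in> lmeasurable" "disjoint_family P" "fund_par B = (\<Union>i<n. P i)"
  defines "F \<equiv> (\<Union>i<n. (\<lambda>z. z - u i) ` P i)"
  shows "F \<in> lmeasurable" "measure lebesgue F = measure lebesgue (fund_par B)"
    and "\<And>x y. x \<in> F \<Longrightarrow> y \<in> F \<Longrightarrow> x - y \<in> int_span B \<Longrightarrow> x = y"
proof -
  have P_eq: "i = j \<and> z = z'"
    if "i < n" "j < n" "z \<in> P i" "z' \<in> P j" "(z - u i) - (z' - u j) \<in> int_span B" for i j z z'
  proof -
    have "z - z' = ((z - u i) - (z' - u j)) - (u j - u i)" by (simp add: algebra_simps)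
    also have "\<dots> \<in> int_span B" using that u int_span_diff by blast
    finally have "z = z'" using fund_par_int_span_diff_eq[OF B] that P(3) by blast
    with that P(2) show ?thesis by (auto simp: disjoint_family_on_def)
  qed
  define T where "T i = (\<lambda>z. z - u i) ` P i" for i
  have T_lm: "T i \<in> lmeasurable" for i
    unfolding T_def using P(1) by (rule measurable_translation_subtract)
  show "F \<in> lmeasurable" unfolding F_def T_def[symmetric] using T_lm by auto
  have T_disj: "disjoint_family_on T {..<n}"
  proof (unfold disjoint_family_on_def, intro ballI impI)
    fix i j assume "i \<in> {..<n}" "j \<in> {..<n}" "i \<noteq> j"
    moreover have "0 \<in> int_span B" if "i < n" using int_span_diff[OF u u] that by fastforce
    ultimately show "T i \<inter> T j = {}" using P_eq[of i j] by (fastforce simp: T_def)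
  qed
  have "measure lebesgue F = (\<Sum>i<n. measure lebesgue (T i))"
    unfolding F_def T_def[symmetric] using T_lm T_disj
    by (intro measure_finite_Union_lmeasurable) auto
  also have "\<dots> = (\<Sum>i<n. measure lebesgue (P i))"
    by (simp add: T_def measure_translation_subtract)
  also have "\<dots> = measure lebesgue (fund_par B)"
    unfolding P(3) using P(1) disjoint_family_on_mono[OF subset_UNIV P(2)]
    by (intro measure_finite_Union_lmeasurable[symmetric]) auto
  finally show "measure lebesgue F = measure lebesgue (fund_par B)" .
  show "x = y" if "x \<in> F" "y \<in> F" "x - y \<in> int_span B" for x y
    using that P_eq by (fastforce simp: F_def)
qed

lemma thin_fundamental_domain:
  fixes B :: "('a::euclidean_space \<times> 'b::euclidean_space) set"
  assumes B: "independent B" "span B = UNIV"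
    and dense: "closure (snd ` int_span B) = UNIV" and "0 < \<delta>"
  obtains F where "F \<in> lmeasurable" "bounded F"
    "measure lebesgue F = measure lebesgue (fund_par B)" "snd ` F \<subseteq> ball 0 \<delta>"
    "\<And>x y. x \<in> F \<Longrightarrow> y \<in> F \<Longrightarrow> x - y \<in> int_span B \<Longrightarrow> x = y"
proof -
  have F0: "fund_par B \<in> lmeasurable" "bounded (fund_par B)"
    using lmeasurable_fund_par[OF B] bounded_fund_par[OF B(1)] .
  obtain n :: nat and u P where u: "\<And>i. i < n \<Longrightarrow> u i \<in> int_span B"
    and P: "\<And>i. P i \<in> lmeasurable" "disjoint_family P" "fund_par B = (\<Union>i<n. P i)"
    and near: "\<And>i z. z \<in> P i \<Longrightarrow> dist (snd (u i)) (snd z) < \<delta>"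
    using partition_near_dense_image[OF F0 dense \<open>0 < \<delta>\<close>] by blast
  define F where "F = (\<Union>i<n. (\<lambda>z. z - u i) ` P i)"
  show ?thesis
  proof (rule that)
    show "F \<in> lmeasurable" "measure lebesgue F = measure lebesgue (fund_par B)"
      "\<And>x y. x \<in> F \<Longrightarrow> y \<in> F \<Longrightarrow> x - y \<in> int_span B \<Longrightarrow> x = y"
      unfolding F_def using rearranged_fund_par[where u=u, OF B u P] by blast+
    show "bounded F"
      unfolding F_def using F0(2) P(3)
      by (auto intro!: bounded_translation_minus intro: bounded_subset)
    show "snd ` F \<subseteq> ball 0 \<delta>"
    proof
      fix y assume "y \<in> snd ` F"
      then obtain i z where "z \<in> P i" "y = snd z - snd (u i)" by (auto simp: F_def)
      then show "y \<in> ball 0 \<delta>" using near[of z i] by (simp add: dist_norm norm_minus_commute)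
    qed
  qed
qed

lemma bounded_thickening:
  fixes A :: "'a::real_normed_vector set"
  assumes "bounded A"
  shows "bounded (\<Union>a\<in>A. ball a \<delta>)"
proof -
  obtain c where c: "\<And>y. y \<in> A \<Longrightarrow> norm y \<le> c" using assms bounded_iff by blast
  have "(\<Union>a\<in>A. ball a \<delta>) \<subseteq> cball 0 (c + \<delta>)"
  proof
    fix y assume "y \<in> (\<Union>a\<in>A. ball a \<delta>)"
    then obtain a where "a \<in> A" "dist a y < \<delta>" by auto
    then show "y \<in> cball 0 (c + \<delta>)"
      using c[of a] norm_triangle_ineq2[of y a] by (auto simp: dist_norm norm_minus_commute)
  qed
  then show ?thesis using bounded_cball bounded_subset by blast
qed

definition window_points :: "('a::euclidean_space \<times> 'b) set \<Rightarrow> real \<Rightarrow> 'b set \<Rightarrow> ('a \<times> 'b) set"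
  where "window_points \<Lambda> R W = {v \<in> \<Lambda>. infnorm (fst v) \<le> R \<and> snd v \<in> W}"

lemma disjoint_int_span_translates:
  assumes F: "\<And>x y. x \<in> F \<Longrightarrow> y \<in> F \<Longrightarrow> x - y \<in> int_span B \<Longrightarrow> x = y"
    and "S \<subseteq> int_span B"
  shows "disjoint_family_on (\<lambda>v. (+) v ` F) S"
proof (unfold disjoint_family_on_def, intro ballI impI)
  fix v w assume "v \<in> S" "w \<in> S" "v \<noteq> w"
  then have "v - w \<in> int_span B" using \<open>S \<subseteq> int_span B\<close> by (intro int_span_diff) auto
  show "(+) v ` F \<inter> (+) w ` F = {}"
  proof (rule ccontr)
    assume "(+) v ` F \<inter> (+) w ` F \<noteq> {}"
    then obtain x y where xy: "x \<in> F" "y \<in> F" "v + x = w + y" by blast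
    then have "y - x = v - w" by (simp add: algebra_simps)
    then have "y = x" using F[OF xy(2,1)] \<open>v - w \<in> int_span B\<close> by simp
    then show False using xy(3) \<open>v \<noteq> w\<close> by simp
  qed
qed

lemma translate_subset_box_times_thickening:
  fixes F :: "('a::euclidean_space \<times> 'b::real_normed_vector) set"
  assumes F: "\<And>z. z \<in> F \<Longrightarrow> norm z \<le> r" "snd ` F \<subseteq> ball 0 \<delta>"
    and v: "infnorm (fst v) \<le> R" "snd v \<in> A"
  shows "(+) v ` F \<subseteq> cbox (- (R + r) *\<^sub>R One) ((R + r) *\<^sub>R One) \<times> (\<Union>a\<in>A. ball a \<delta>)"
proof
  fix x assume "x \<in> (+) v ` F"
  then obtain z where z: "z \<in> F" "x = v + z" by blast
  have "infnorm (fst x) \<le> infnorm (fst v) + infnorm (fst z)"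
    using z(2) infnorm_triangle by simp
  also have "\<dots> \<le> R + r"
    using v(1) F(1)[OF z(1)] infnorm_le_norm[of "fst z"]
      norm_fst_le[of "fst z" "snd z", unfolded prod.collapse] by linarith
  finally have "fst x \<in> cbox (- (R + r) *\<^sub>R One) ((R + r) *\<^sub>R One)"
    by (simp only: infnorm_le_iff_cbox)
  moreover have "snd x \<in> (\<Union>a\<in>A. ball a \<delta>)"
    using F(2) z v(2) by (force simp: dist_norm)
  ultimately show "x \<in> cbox (- (R + r) *\<^sub>R One) ((R + r) *\<^sub>R One) \<times> (\<Union>a\<in>A. ball a \<delta>)"
    by (simp add: mem_Times_iff)
qed

lemma card_mult_measure_le_window:
  fixes F :: "('a::euclidean_space \<times> 'b::euclidean_space) set"
  assumes F: "F \<in> lmeasurable" "\<And>z. z \<in> F \<Longrightarrow> norm z \<le> r" "snd ` F \<subseteq> ball 0 \<delta>"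
    and F_disj: "\<And>x y. x \<in> F \<Longrightarrow> y \<in> F \<Longrightarrow> x - y \<in> int_span B \<Longrightarrow> x = y"
    and "bounded A" "0 \<le> R" "0 \<le> r"
    and S: "finite S" "S \<subseteq> window_points (int_span B) R A"
  shows "real (card S) * measure lebesgue F
    \<le> (2 * (R + r)) ^ DIM('a) * measure lebesgue (\<Union>a\<in>A. ball a \<delta>)"
proof -
  define box where "box = cbox (- (R + r) *\<^sub>R One) ((R + r) *\<^sub>R One :: 'a)"
  define A\<delta> where "A\<delta> = (\<Union>a\<in>A. ball a \<delta>)"
  have A\<delta>: "A\<delta> \<in> sets borel" "bounded A\<delta>"
    unfolding A\<delta>_def using \<open>bounded A\<close> by (auto intro: borel_open bounded_thickening)
  have X_lm: "box \<times> A\<delta> \<in> lmeasurable"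
    unfolding box_def using A\<delta>
    by (intro bounded_set_imp_lmeasurable bounded_Times bounded_cbox lborelD)
      (auto simp: borel_prod[symmetric])
  have "real (card S) * measure lebesgue F \<le> measure lebesgue (box \<times> A\<delta>)"
  proof (rule card_mult_measure_le_if_disjoint_translates[OF S(1) F(1) X_lm])
    show "disjoint_family_on (\<lambda>v. (+) v ` F) S"
      using S(2) by (intro disjoint_int_span_translates F_disj) (auto simp: window_points_def)
    show "(+) v ` F \<subseteq> box \<times> A\<delta>" if "v \<in> S" for v
      unfolding box_def A\<delta>_def using F(2,3) that S(2)
      by (intro translate_subset_box_times_thickening) (auto simp: window_points_def)
  qed
  also have "\<dots> = measure lebesgue box * measure lebesgue A\<delta>"
    unfolding box_def using A\<delta> by (intro measure_lebesgue_Times) (auto intro: borel_closed)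
  also have "\<dots> = (2 * (R + r)) ^ DIM('a) * measure lebesgue A\<delta>"
    unfolding box_def using \<open>0 \<le> R\<close> \<open>0 \<le> r\<close> by (subst measure_cbox_infnorm) auto
  finally show ?thesis unfolding A\<delta>_def .
qed

lemma Inter_thickenings_eq_closure:
  fixes A :: "'a::metric_space set"
  shows "(\<Inter>n. \<Union>a\<in>A. ball a (1 / real (Suc n))) = closure A"
proof (intro equalityI subsetI)
  fix y assume y: "y \<in> (\<Inter>n. \<Union>a\<in>A. ball a (1 / real (Suc n)))"
  have "\<exists>a\<in>A. dist a y < e" if e: "0 < e" for e
  proof -
    obtain n where n: "1 / real (Suc n) < e" using nat_approx_posE[OF e] by blast
    from y have "y \<in> (\<Union>a\<in>A. ball a (1 / real (Suc n)))" by (rule INT_D) simp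
    then obtain a where "a \<in> A" "dist a y < 1 / real (Suc n)" by auto
    with n show ?thesis by force
  qed
  then show "y \<in> closure A" by (simp add: closure_approachable)
next
  fix y assume y: "y \<in> closure A"
  have "y \<in> (\<Union>a\<in>A. ball a (1 / real (Suc n)))" for n
  proof -
    obtain a where "a \<in> A" "dist a y < 1 / real (Suc n)"
      using y closure_approachable[of y A] by (meson of_nat_0_less_iff zero_less_Suc zero_less_divide_1_iff)
    then show ?thesis by auto
  qed
  then show "y \<in> (\<Inter>n. \<Union>a\<in>A. ball a (1 / real (Suc n)))" by blast
qed

lemma measure_thickening_tendsto:
  fixes A :: "'a::euclidean_space set"
  assumes "bounded A" "negligible (frontier A)"
  shows "(\<lambda>n. measure lebesgue (\<Union>a\<in>A. ball a (1 / real (Suc n)))) \<longlonglongrightarrow> measure lebesgue A"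
proof -
  define A\<delta> where "A\<delta> n = (\<Union>a\<in>A. ball a (1 / real (Suc n)))" for n
  have lm: "A\<delta> n \<in> lmeasurable" for n
    unfolding A\<delta>_def using \<open>bounded A\<close> by (intro lmeasurable_open bounded_thickening) auto
  have "decseq A\<delta>"
    unfolding A\<delta>_def by (intro decseq_SucI UN_mono ball_subset_ball_iff[THEN iffD2]) (auto simp: frac_le)
  then have "(\<lambda>n. measure lebesgue (A\<delta> n)) \<longlonglongrightarrow> measure lebesgue (\<Inter>n. A\<delta> n)"
  proof (rule Lim_measure_decseq[rotated])
    show "emeasure lebesgue (A\<delta> n) \<noteq> \<infinity>" for n
      unfolding infinity_ennreal_def by (rule fmeasurableD2[OF lm])
  qed (use lm in auto)
  also have "measure lebesgue (\<Inter>n. A\<delta> n) = measure lebesgue A"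
    unfolding A\<delta>_def Inter_thickenings_eq_closure using assms by (rule measure_closure)
  finally show ?thesis unfolding A\<delta>_def .
qed

lemma eventually_power_add_mult_le:
  fixes M c r :: real
  assumes "M < c"
  shows "eventually (\<lambda>R. (R + r) ^ n * M \<le> c * R ^ n) at_top"
proof -
  have "((\<lambda>R. (1 + r / R) ^ n * M) \<longlongrightarrow> (1 + 0) ^ n * M) at_top"
    by (intro tendsto_intros tendsto_divide_0[OF tendsto_const] filterlim_at_top_imp_at_infinity
        filterlim_ident)
  then have "eventually (\<lambda>R. (1 + r / R) ^ n * M < c) at_top"
    using assms by (intro order_tendstoD(2)) auto
  then show ?thesis using eventually_gt_at_top[of 0]
  proof eventually_elim
    case (elim R)
    have "R + r = R * (1 + r / R)" using elim(2) by (simp add: field_simps)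
    then have "(R + r) ^ n * M = R ^ n * ((1 + r / R) ^ n * M)" by (simp add: power_mult_distrib)
    also have "\<dots> \<le> R ^ n * c" using elim by (intro mult_left_mono) auto
    finally show ?case by (simp add: mult.commute)
  qed
qed

lemma window_points_mono:
  assumes "R \<le> R'" "W \<subseteq> W'"
  shows "window_points \<Lambda> R W \<subseteq> window_points \<Lambda> R' W'"
  using assms by (auto simp: window_points_def)

lemma finite_window_points:
  fixes B :: "('a::euclidean_space \<times> 'b::euclidean_space) set"
  assumes B: "independent B" "span B = UNIV" and "bounded A"
  shows "finite (window_points (int_span B) R A)"
proof -
  let ?F = "fund_par B"
  obtain r where r: "0 < r" "\<And>z. z \<in> ?F \<Longrightarrow> norm z \<le> r"
    using bounded_fund_par[OF B(1)] bounded_pos by blast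
  have snd_F: "snd ` ?F \<subseteq> ball 0 (r + 1)"
  proof
    fix y assume "y \<in> snd ` ?F"
    then obtain z where "z \<in> ?F" "y = snd z" by blast
    then show "y \<in> ball 0 (r + 1)" using r(2)[of z] norm_snd_le[of "snd z" "fst z"] by simp
  qed
  define K where "K = (2 * (max R 0 + r)) ^ DIM('a) * measure lebesgue (\<Union>a\<in>A. ball a (r + 1))
    / measure lebesgue ?F"
  have "card S \<le> nat \<lceil>K\<rceil>" if "S \<subseteq> window_points (int_span B) R A" "finite S" for S
  proof -
    have "S \<subseteq> window_points (int_span B) (max R 0) A"
      using that(1) window_points_mono[of R "max R 0" A A] by auto
    then have "real (card S) * measure lebesgue ?F
        \<le> (2 * (max R 0 + r)) ^ DIM('a) * measure lebesgue (\<Union>a\<in>A. ball a (r + 1))"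
      using lmeasurable_fund_par[OF B] r snd_F fund_par_int_span_diff_eq[OF B] \<open>bounded A\<close> \<open>finite S\<close>
      by (intro card_mult_measure_le_window) auto
    then have "real (card S) \<le> K"
      using fund_par_measure_pos[OF B] by (simp add: K_def pos_le_divide_eq)
    then show ?thesis by linarith
  qed
  then show ?thesis using finite_if_finite_subsets_card_bdd by blast
qed

lemma eventually_card_window_points_le:
  fixes B :: "('a::euclidean_space \<times> 'b::euclidean_space) set"
  assumes B: "independent B" "span B = UNIV" and dense: "closure (snd ` int_span B) = UNIV"
    and A: "bounded A" "interior A \<noteq> {}" "negligible (frontier A)"
  shows "eventually (\<lambda>R. real (card (window_points (int_span B) R A)) * measure lebesgue (fund_par B)
    \<le> 2 ^ (DIM('a) + 1) * measure lebesgue A * R ^ DIM('a)) at_top"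
proof -
  let ?m = "measure lebesgue A"
  have "0 < ?m"
    using measurable_Jordan[OF A(1,3)] A(2) by (rule measure_pos_if_interior_nonempty)
  then have "eventually (\<lambda>n. measure lebesgue (\<Union>a\<in>A. ball a (1 / real (Suc n))) < 2 * ?m) sequentially"
    by (intro order_tendstoD(2)[OF measure_thickening_tendsto[OF A(1,3)]]) simp
  then obtain n where n: "measure lebesgue (\<Union>a\<in>A. ball a (1 / real (Suc n))) < 2 * ?m"
    by (auto simp: eventually_sequentially)
  \<comment> \<open>The extra factor 2 leaves room both for thickening A and for replacing R by R + r.\<close>
  define \<delta> where "\<delta> = 1 / real (Suc n)"
  define M where "M = measure lebesgue (\<Union>a\<in>A. ball a \<delta>)"
  obtain F where F: "F \<in> lmeasurable" "bounded F" "measure lebesgue F = measure lebesgue (fund_par B)"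
    "snd ` F \<subseteq> ball 0 \<delta>"
    "\<And>x y. x \<in> F \<Longrightarrow> y \<in> F \<Longrightarrow> x - y \<in> int_span B \<Longrightarrow> x = y"
    using thin_fundamental_domain[OF B dense, of \<delta>] by (auto simp: \<delta>_def)
  obtain r where r: "0 < r" "\<And>z. z \<in> F \<Longrightarrow> norm z \<le> r" using F(2) bounded_pos by blast
  have "eventually (\<lambda>R. (R + r) ^ DIM('a) * M \<le> 2 * ?m * R ^ DIM('a)) at_top"
    using n by (intro eventually_power_add_mult_le) (simp add: M_def \<delta>_def)
  then show ?thesis using eventually_ge_at_top[of 0]
  proof eventually_elim
    case (elim R)
    let ?W = "window_points (int_span B) R A"
    have "real (card ?W) * measure lebesgue (fund_par B) = real (card ?W) * measure lebesgue F"
      by (simp add: F(3))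
    also have "\<dots> \<le> (2 * (R + r)) ^ DIM('a) * M"
      unfolding M_def using F r elim(2) finite_window_points[OF B A(1)] A(1)
      by (intro card_mult_measure_le_window) auto
    also have "\<dots> = 2 ^ DIM('a) * ((R + r) ^ DIM('a) * M)" by (simp only: power_mult_distrib mult.assoc)
    also have "\<dots> \<le> 2 ^ DIM('a) * (2 * ?m * R ^ DIM('a))" using elim(1) by simp
    finally show ?case by simp
  qed
qed

lemma smallo_diagonal_of_decreasing_bounds:
  fixes N :: "nat \<Rightarrow> real \<Rightarrow> real" and C Rs T :: "nat \<Rightarrow> real"
  assumes N_nonneg: "\<And>i R. 0 \<le> N i R"
    and N_decr: "\<And>i R. 1 \<le> i \<Longrightarrow> N (Suc i) R \<le> N i R"
    and bound: "\<And>i R. 1 \<le> i \<Longrightarrow> Rs i \<le> R \<Longrightarrow> N i R \<le> C i * R ^ d"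
    and C: "C \<longlonglongrightarrow> 0" and T: "filterlim T at_top sequentially"
  shows "(\<lambda>j. N j (T j)) \<in> o(\<lambda>j. T j ^ d)"
proof (rule landau_o.smallI)
  fix c :: real assume "0 < c"
  have N_antimono: "N j R \<le> N i R" if "1 \<le> i" "i \<le> j" for i j R
    using that(2)
  proof (induction j rule: dec_induct)
    case (step k)
    then show ?case using N_decr[of k R] that(1) by linarith
  qed simp
  obtain i where i: "1 \<le> i" "C i < c"
  proof -
    have "eventually (\<lambda>i. C i < c) sequentially" using order_tendstoD(2)[OF C \<open>0 < c\<close>] .
    then obtain i0 where "\<And>i. i0 \<le> i \<Longrightarrow> C i < c" by (auto simp: eventually_sequentially)
    then show ?thesis using that[of "max i0 1"] by simp
  qed
  have "eventually (\<lambda>j. max (Rs i) 0 \<le> T j) sequentially" using T filterlim_at_top by blast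
  then show "eventually (\<lambda>j. norm (N j (T j)) \<le> c * norm (T j ^ d)) sequentially"
    using eventually_ge_at_top[of i]
  proof eventually_elim
    case (elim j)
    have "N j (T j) \<le> N i (T j)" using N_antimono i(1) elim(2) by blast
    also have "\<dots> \<le> C i * T j ^ d" using bound[OF i(1)] elim(1) by simp
    also have "\<dots> \<le> c * T j ^ d" using i(2) elim(1) by (intro mult_right_mono) auto
    finally show ?case using N_nonneg elim(1) by simp
  qed
qed

lemma star_map_fst:
  assumes "inj_on fst L" "v \<in> L"
  shows "star_map L (fst v) = snd v"
proof -
  have "(THE x. x \<in> L \<and> fst x = fst v) = v"
    using assms by (intro the_equality) (auto dest: inj_onD)
  then show ?thesis unfolding star_map_def by simp
qed

lemma card_star_window:
  assumes "inj_on fst L"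
  shows "card {l \<in> fst ` L. infnorm l \<le> R \<and> star_map L l \<in> W} = card (window_points L R W)"
proof -
  have "{l \<in> fst ` L. infnorm l \<le> R \<and> star_map L l \<in> W} = fst ` window_points L R W"
    using star_map_fst[OF assms] by (force simp: window_points_def)
  moreover have "inj_on fst (window_points L R W)"
    using assms by (rule inj_on_subset) (auto simp: window_points_def)
  ultimately show ?thesis by (simp add: card_image)
qed

theorem lemma3p1:
  fixes \<L> :: "((real^'d::finite) \<times> (real^'h::finite)) set"
    and A :: "nat \<Rightarrow> (real^'h::finite) set"
  assumes lat: "is_lattice \<L>"
    and inj: "inj_on fst \<L>"
    and dense: "closure (snd ` \<L>) = UNIV"
    and relcpt: "\<And>i. i \<ge> 1 \<Longrightarrow> compact (closure (A i))"
    and meas: "\<And>i. i \<ge> 1 \<Longrightarrow> A i \<in> sets lebesgue"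
    and intr: "\<And>i. i \<ge> 1 \<Longrightarrow> interior (A i) \<noteq> {}"
    and bdry: "\<And>i. i \<ge> 1 \<Longrightarrow> frontier (A i) \<in> null_sets lebesgue"
    and decr: "\<And>i. i \<ge> 1 \<Longrightarrow> A (Suc i) \<subseteq> A i"
    and vol0: "(\<lambda>i. measure lebesgue (A i)) \<longlonglongrightarrow> 0"
  shows "(\<exists>Rs :: nat \<Rightarrow> real. \<forall>i\<ge>1. \<forall>R\<ge>Rs i.
            real (card {l \<in> fst ` \<L>. infnorm l \<le> R \<and> star_map \<L> l \<in> A i})
              \<le> 2 ^ (CARD('d) + 1) * lattice_dens \<L> * measure lebesgue (A i) * R ^ CARD('d))
       \<and> (\<forall>T :: nat \<Rightarrow> real. filterlim T at_top sequentially \<longrightarrow>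
            (\<lambda>j. real (card {l \<in> fst ` \<L>. infnorm l \<le> T j \<and> star_map \<L> l \<in> A j}))
              \<in> o(\<lambda>j. T j ^ CARD('d)))"
proof -
  obtain B where B: "independent B" "span B = UNIV" and L: "\<L> = int_span B"
    and dens: "lattice_dens \<L> = 1 / measure lebesgue (fund_par B)"
    using lat by (rule is_lattice_basis)
  have A: "bounded (A i)" "interior (A i) \<noteq> {}" "negligible (frontier (A i))" if "1 \<le> i" for i
    using relcpt[OF that] intr[OF that] bdry[OF that] compact_imp_bounded bounded_subset closure_subset
    by (auto simp: negligible_iff_null_sets)
  define N where "N i R = real (card {l \<in> fst ` \<L>. infnorm l \<le> R \<and> star_map \<L> l \<in> A i})" for i R
  have N: "N i R = real (card (window_points (int_span B) R (A i)))" for i R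
    unfolding N_def card_star_window[OF inj] by (simp add: L)
  define C where "C i = 2 ^ (CARD('d) + 1) * lattice_dens \<L> * measure lebesgue (A i)" for i
  have "eventually (\<lambda>R. N i R \<le> C i * R ^ CARD('d)) at_top" if "1 \<le> i" for i
    using eventually_card_window_points_le[OF B dense[unfolded L] A[OF that]]
    by eventually_elim (use fund_par_measure_pos[OF B] in \<open>simp add: N C_def dens field_simps\<close>)
  then obtain Rs where Rs: "\<And>i R. 1 \<le> i \<Longrightarrow> Rs i \<le> R \<Longrightarrow> N i R \<le> C i * R ^ CARD('d)"
    unfolding eventually_at_top_linorder by metis
  have "(\<lambda>j. N j (T j)) \<in> o(\<lambda>j. T j ^ CARD('d))" if "filterlim T at_top sequentially" for T
  proof (rule smallo_diagonal_of_decreasing_bounds[OF _ _ Rs _ that])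
    show "N (Suc i) R \<le> N i R" if "1 \<le> i" for i R
      unfolding N of_nat_le_iff
      by (intro card_mono finite_window_points[OF B A(1)[OF that]] window_points_mono decr[OF that]) simp
    show "C \<longlonglongrightarrow> 0" unfolding C_def using tendsto_mult_right_zero[OF vol0] by simp
  qed (simp add: N_def)
  with Rs show ?thesis unfolding N_def C_def by blast
qed

end
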